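(* Consider isobaric vitrification of a system by stepwise cooling of the medium, where at each medium temperature $T_0$ the system is observed for a time $\tau_{\text{obs}}$ before the temperature is lowered again, and suppose $\tau_{\text{obs}}<\tau_{\text{eq}}(T_0)$ for every $T_0<T_{0\text{g}}$. Then the calorimetrically measured (extrapolated) entropy at absolute zero exceeds the entropy of the hypothetical equilibrium supercooled liquid at absolute zero: $$S_{\text{expt}}(0)>S_{\text{SCL}}(0).$$
   Context: The system is in contact with a medium at temperature $T_0$ and fixed pressure $P_0$. $\tau_{\text{eq}}(T_0)$ is the time needed for the system to reach equilibrium (the supercooled liquid, SCL, taken as the equilibrium state; ordered/crystalline states are excluded from consideration) with the medium at $T_0$; $T_{0\text{g}}$ is the temperature at which $\tau_{\text{eq}}$ equals $\tau_{\text{obs}}$, so that above $T_{0\text{g}}$ the system is the equilibrated SCL and below it the system is out of equilibrium. $S_{\text{SCL}}(T_0)$ denotes the entropy of the equilibrium supercooled liquid, hypothetically continued to all $T_0$ down to $0$. The measured entropy is $S_{\text{expt}}(0)=S(T_{0\text{A}})+\int_{T_{0\text{A}}}^{0}C_P\,dT_0/T_0$ for a starting temperature $T_{0\text{A}}\ge T_{0\text{g}}$, where $C_P|dT_0|=|d_{\text{e}}Q|=\int_0^{\tau_{\text{obs}}}|\dot Q_{\text{e}}|\,dt$ is the heat lost to the medium during the observation time at each step, $\dot Q_{\text{e}}=d_{\text{e}}Q/dt$ being the rate of heat exchange with the medium; the SCL heat loss at $T_0$ is the heat lost over $\tau_{\text{eq}}(T_0)$, $\int_0^{\tau_{\text{eq}}(T_0)}|\dot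 Q_{\text{e}}|\,dt$. *)

theory Defs
  imports "HOL-Analysis.Analysis"
begin

text \<open>qd T0 t : rate of heat exchange with the medium at time t after the medium
  temperature has been set to T0 (time measured from the start of the step).\<close>

definition heat_lost :: "(real \<Rightarrow> real \<Rightarrow> real) \<Rightarrow> real \<Rightarrow> real \<Rightarrow> real" where
  "heat_lost qd T0 \<tau> = (LINT t:{0..\<tau>}|lborel. \<bar>qd T0 t\<bar>)"

text \<open>Measured heat capacity: C_P |dT0| = heat lost during the observation time,
  with temperature step size delta.\<close>
definition CP_expt :: "(real \<Rightarrow> real \<Rightarrow> real) \<Rightarrow> real \<Rightarrow> real \<Rightarrow> real \<Rightarrow> real" where
  "CP_expt qd \<delta> \<tau>obs T0 = heat_lost qd T0 \<tau>obs / \<delta>"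

definition CP_SCL :: "(real \<Rightarrow> real \<Rightarrow> real) \<Rightarrow> real \<Rightarrow> (real \<Rightarrow> real) \<Rightarrow> real \<Rightarrow> real" where
  "CP_SCL qd \<delta> \<tau>eq T0 = heat_lost qd T0 (\<tau>eq T0) / \<delta>"

text \<open>S_expt(0) = S(T0A) + int_{T0A}^0 C_P dT0/T0 = S(T0A) - int_0^{T0A} C_P/T0 dT0.\<close>
definition S_expt0 :: "real \<Rightarrow> real \<Rightarrow> (real \<Rightarrow> real) \<Rightarrow> real" where
  "S_expt0 S_A T0A Cp = S_A - (LINT T:{0<..T0A}|lborel. Cp T / T)"

end

theory Submission
  imports Defs
begin

text \<open>Above the glass temperature the system equilibrates within the observation time,
  so the measured heat capacity equals that of the supercooled liquid. Below it the
  observation stops while the system is still releasing heat, so strictly less heat is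
  measured at each step. Hence the measured \<open>\<integral> C\<^sub>P/T\<^sub>0\<close> over \<open>(0, T\<^sub>0\<^sub>A]\<close> is strictly smaller
  than the supercooled liquid's, and subtracting less entropy from the common starting
  value \<open>S(T\<^sub>0\<^sub>A)\<close> leaves more at absolute zero.\<close>

lemma set_integral_pos:
  fixes f :: "'a \<Rightarrow> real"
  assumes int: "set_integrable M A f" and A: "A \<in> sets M"
    and nonneg: "\<And>x. x \<in> A \<Longrightarrow> 0 \<le> f x"
    and B: "B \<subseteq> A" "B \<in> sets M" "emeasure M B > 0"
    and pos: "\<And>x. x \<in> B \<Longrightarrow> 0 < f x"
  shows "(LINT x:A|M. f x) > 0"
proof -
  let ?g = "\<lambda>x. indicator A x *\<^sub>R f x"
  have g_int: "integrable M ?g" using int unfolding set_integrable_def .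
  have g_nonneg: "AE x in M. 0 \<le> ?g x" using nonneg by (auto simp: indicator_def)
  have "integral\<^sup>L M ?g \<noteq> 0"
  proof
    assume "integral\<^sup>L M ?g = 0"
    then have "AE x in M. ?g x = 0"
      using integral_nonneg_eq_0_iff_AE[OF g_int g_nonneg] by simp
    then have "AE x in M. x \<notin> B"
      by (rule AE_mp) (auto intro!: AE_I2 dest: pos simp: indicator_def subsetD[OF B(1)])
    moreover have "{x \<in> space M. x \<in> B} = B" using sets.sets_into_space[OF B(2)] by auto
    ultimately have "emeasure M B = 0"
      using AE_iff_measurable[OF B(2), of "\<lambda>x. x \<notin> B"] by simp
    then show False using B(3) by simp
  qed
  moreover have "integral\<^sup>L M ?g \<ge> 0" by (rule integral_nonneg_AE[OF g_nonneg])
  ultimately show ?thesis unfolding set_lebesgue_integral_def by linarith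
qed

lemma set_integral_less:
  fixes f g :: "'a \<Rightarrow> real"
  assumes f: "set_integrable M A f" and g: "set_integrable M A g" and A: "A \<in> sets M"
    and le: "\<And>x. x \<in> A \<Longrightarrow> f x \<le> g x"
    and B: "B \<subseteq> A" "B \<in> sets M" "emeasure M B > 0"
    and less: "\<And>x. x \<in> B \<Longrightarrow> f x < g x"
  shows "(LINT x:A|M. f x) < (LINT x:A|M. g x)"
proof -
  have "(LINT x:A|M. g x - f x) > 0"
    by (rule set_integral_pos[OF set_integral_diff(1)[OF g f] A _ B])
      (use le less B(1) in fastforce)+
  then show ?thesis using set_integral_diff(2)[OF g f] by simp
qed

lemma heat_lost_eq_if_equilibrated:
  assumes "\<tau>' \<le> \<tau>" and "\<And>t. t \<ge> \<tau>' \<Longrightarrow> qd T0 t = 0"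
  shows "heat_lost qd T0 \<tau> = heat_lost qd T0 \<tau>'"
proof -
  have "\<And>t. indicator {0..\<tau>} t *\<^sub>R \<bar>qd T0 t\<bar> = indicator {0..\<tau>'} t *\<^sub>R \<bar>qd T0 t\<bar>"
    using assms by (auto simp: indicator_def)
  then show ?thesis
    unfolding heat_lost_def set_lebesgue_integral_def by (rule Bochner_Integration.integral_cong[OF refl])
qed

lemma heat_lost_strict_mono:
  assumes ab: "0 \<le> a" "a < b" and int: "set_integrable lborel {0..b} (qd T0)"
    and relaxing: "\<And>t. a < t \<Longrightarrow> t < b \<Longrightarrow> qd T0 t \<noteq> 0"
  shows "heat_lost qd T0 a < heat_lost qd T0 b"
proof -
  have abs_int: "set_integrable lborel {0..b} (\<lambda>t. \<bar>qd T0 t\<bar>)"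
    using int set_integrable_abs by blast
  have int_head: "set_integrable lborel {0..a} (\<lambda>t. \<bar>qd T0 t\<bar>)"
    by (rule set_integrable_subset[OF abs_int]) (use ab in auto)
  have int_tail: "set_integrable lborel {a<..b} (\<lambda>t. \<bar>qd T0 t\<bar>)"
    by (rule set_integrable_subset[OF abs_int]) (use ab in auto)
  have union: "{0..b} = {0..a} \<union> {a<..b}" using ab by auto
  have split: "heat_lost qd T0 b = heat_lost qd T0 a + (LINT t:{a<..b}|lborel. \<bar>qd T0 t\<bar>)"
    unfolding heat_lost_def union by (rule set_integral_Un[OF _ int_head int_tail]) auto
  have "(LINT t:{a<..b}|lborel. \<bar>qd T0 t\<bar>) > 0"
    by (rule set_integral_pos[OF int_tail, where B="{a<..<b}"]) (use ab relaxing in auto)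
  then show ?thesis using split by linarith
qed

theorem theorem2:
  fixes qd :: "real \<Rightarrow> real \<Rightarrow> real"
    and tau_eq :: "real \<Rightarrow> real"
    and S_SCL :: "real \<Rightarrow> real"
    and tau_obs \<delta> T0g T0A :: real
  assumes step_pos: "\<delta> > 0"
    and obs_pos: "tau_obs > 0"
    and T0g_pos: "T0g > 0"
    and start: "T0A \<ge> T0g"
    and T0g_def: "tau_eq T0g = tau_obs"
    and above_g: "\<forall>T0. T0 \<ge> T0g \<longrightarrow> tau_eq T0 \<le> tau_obs"
    and below_g: "\<forall>T0. 0 < T0 \<and> T0 < T0g \<longrightarrow> tau_obs < tau_eq T0"
    and equilibrated: "\<forall>T0 t. T0 > 0 \<longrightarrow> t \<ge> tau_eq T0 \<longrightarrow> qd T0 t = 0"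
    and relaxing: "\<forall>T0 t. T0 > 0 \<longrightarrow> 0 \<le> t \<longrightarrow> t < tau_eq T0 \<longrightarrow> qd T0 t \<noteq> 0"
    and int_obs: "\<forall>T0. T0 > 0 \<longrightarrow> set_integrable lborel {0..tau_obs} (qd T0)"
    and int_eq: "\<forall>T0. T0 > 0 \<longrightarrow> set_integrable lborel {0..tau_eq T0} (qd T0)"
    and int_CP: "set_integrable lborel {0<..T0A} (\<lambda>T. CP_expt qd \<delta> tau_obs T / T)"
    and int_CP_SCL: "set_integrable lborel {0<..T0A} (\<lambda>T. CP_SCL qd \<delta> tau_eq T / T)"
    and S_SCL_0: "S_SCL 0 = S_SCL T0A - (LINT T:{0<..T0A}|lborel. CP_SCL qd \<delta> tau_eq T / T)"
  shows "S_expt0 (S_SCL T0A) T0A (CP_expt qd \<delta> tau_obs) > S_SCL 0"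
proof -
  have heat_above: "heat_lost qd T tau_obs = heat_lost qd T (tau_eq T)" if "T \<ge> T0g" for T
    using that T0g_pos above_g equilibrated by (intro heat_lost_eq_if_equilibrated) auto
  have heat_below: "heat_lost qd T tau_obs < heat_lost qd T (tau_eq T)" if "0 < T" "T < T0g" for T
    using that obs_pos below_g relaxing int_eq by (intro heat_lost_strict_mono) auto
  have "(LINT T:{0<..T0A}|lborel. CP_expt qd \<delta> tau_obs T / T)
      < (LINT T:{0<..T0A}|lborel. CP_SCL qd \<delta> tau_eq T / T)"
  proof (rule set_integral_less[OF int_CP int_CP_SCL, where B="{0<..<T0g}"])
    fix T :: real assume "T \<in> {0<..T0A}"
    then show "CP_expt qd \<delta> tau_obs T / T \<le> CP_SCL qd \<delta> tau_eq T / T"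
      using heat_above heat_below step_pos
      by (cases "T \<ge> T0g") (auto simp: CP_SCL_def CP_expt_def divide_right_mono less_imp_le)
  next
    fix T :: real assume "T \<in> {0<..<T0g}"
    then show "CP_expt qd \<delta> tau_obs T / T < CP_SCL qd \<delta> tau_eq T / T"
      using heat_below step_pos by (auto simp: CP_SCL_def CP_expt_def divide_strict_right_mono)
  qed (use start T0g_pos in auto)
  then show ?thesis using S_SCL_0 unfolding S_expt0_def by linarith
qed

end
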